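(* Let $F$ be a DQCNF. Starting from $F$, repeatedly replace the current DQCNF $G$ by $\varphi * G$ for some non-trivial autarky $\varphi$ of $G$, as long as $G$ has a non-trivial autarky. Then this process terminates, and regardless of the choices of autarkies made, the final result is the lean kernel $N(F)$, the largest lean sub-DQCNF of $F$.
   Context: A DQCNF $F$ consists of a finite set $X$ of universal variables, a finite set $Y$ of existential variables (disjoint from $X$), for each $y \in Y$ a dependency set $D(y) \subseteq X$, and a matrix which is a CNF, i.e. a finite set of clauses over the variables $X \cup Y$. A sub-DQCNF of $F$ is a DQCNF with the same variables and dependency sets whose matrix is a subset of the matrix of $F$. An autarky $\varphi$ of $F$ is a partial assignment that assigns to some set $\mathrm{var}(\varphi) \subseteq Y$ of existential variables boolean functions $\varphi(y)$ depending only on the variables in $D(y)$, such that every clause of $F$ containing a literal whose variable lies in $\mathrm{var}(\varphi)$ becomes a tautology after substituting $\varphi(y)$ for each $y \in \mathrm{var}(\varphi)$, i.e. evaluates to true under every assignment to all universal variables and all existential variables not in $\mathrm{var}(\varphi)$. The DQCNF $\varphi * F$ has the same variables and dependency sets as $F$, and its matrix is obtained by removing all clauses of $F$ containing a literal whose variable lies in $\mathrm{var}(\varphi)$ (the clauses satisfied by $\varphi$). An autarky $\varphi$ of $F$ is non-trivial if $\varphi * F \neq F$, i.e. it satisfies at least one clause. A DQCNF is lean if it has no non-trivial autarky. The union of two lean sub-DQCNFs of $F$ is lean, so $F$ has a unique largest lean sub-DQCNF, called the lean kernel $N(F)$. *)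

theory Defs
  imports Main
begin

text \<open>Literals are pairs (variable, polarity); True = positive literal. Sub-DQCNFs keep X, Y, D fixed, so we
  only vary the matrix.\<close>

type_synonym 'v lit = "'v \<times> bool"
type_synonym 'v clause = "'v lit set"
type_synonym 'v cnf = "'v clause set"

definition dqcnf :: "'v set \<Rightarrow> 'v set \<Rightarrow> ('v \<Rightarrow> 'v set) \<Rightarrow> 'v cnf \<Rightarrow> bool" where
  "dqcnf X Y D F \<longleftrightarrow> finite X \<and> finite Y \<and> X \<inter> Y = {} \<and>
     (\<forall>y\<in>Y. D y \<subseteq> X) \<and> finite F \<and>
     (\<forall>C\<in>F. finite C \<and> (\<forall>l\<in>C. fst l \<in> X \<union> Y))"

text \<open>A partial assignment of boolean functions to existential variables:
  phi y = Some f assigns to y the boolean function f, which takes a total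
  assignment (of which only the universal variables in D y may matter).\<close>

type_synonym 'v passign = "'v \<Rightarrow> (('v \<Rightarrow> bool) \<Rightarrow> bool) option"

definition lit_val :: "'v passign \<Rightarrow> ('v \<Rightarrow> bool) \<Rightarrow> 'v lit \<Rightarrow> bool" where
  "lit_val \<phi> \<alpha> l = (case \<phi> (fst l) of
       Some f \<Rightarrow> f \<alpha> = snd l
     | None \<Rightarrow> \<alpha> (fst l) = snd l)"

definition touches :: "'v passign \<Rightarrow> 'v clause \<Rightarrow> bool" where
  "touches \<phi> C \<longleftrightarrow> (\<exists>l\<in>C. fst l \<in> dom \<phi>)"

definition autarky :: "'v set \<Rightarrow> 'v set \<Rightarrow> ('v \<Rightarrow> 'v set) \<Rightarrow> 'v cnf \<Rightarrow> 'v passign \<Rightarrow> bool" where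
  "autarky X Y D F \<phi> \<longleftrightarrow>
     dom \<phi> \<subseteq> Y \<and>
     (\<forall>y f. \<phi> y = Some f \<longrightarrow> (\<forall>\<alpha> \<beta>. (\<forall>x\<in>D y. \<alpha> x = \<beta> x) \<longrightarrow> f \<alpha> = f \<beta>)) \<and>
     (\<forall>C\<in>F. touches \<phi> C \<longrightarrow> (\<forall>\<alpha>. \<exists>l\<in>C. lit_val \<phi> \<alpha> l))"

definition apply_aut :: "'v passign \<Rightarrow> 'v cnf \<Rightarrow> 'v cnf" where
  "apply_aut \<phi> F = {C\<in>F. \<not> touches \<phi> C}"

definition nontrivial_autarky :: "'v set \<Rightarrow> 'v set \<Rightarrow> ('v \<Rightarrow> 'v set) \<Rightarrow> 'v cnf \<Rightarrow> 'v passign \<Rightarrow> bool" where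
  "nontrivial_autarky X Y D F \<phi> \<longleftrightarrow> autarky X Y D F \<phi> \<and> apply_aut \<phi> F \<noteq> F"

definition lean :: "'v set \<Rightarrow> 'v set \<Rightarrow> ('v \<Rightarrow> 'v set) \<Rightarrow> 'v cnf \<Rightarrow> bool" where
  "lean X Y D F \<longleftrightarrow> \<not> (\<exists>\<phi>. nontrivial_autarky X Y D F \<phi>)"

definition is_lean_kernel :: "'v set \<Rightarrow> 'v set \<Rightarrow> ('v \<Rightarrow> 'v set) \<Rightarrow> 'v cnf \<Rightarrow> 'v cnf \<Rightarrow> bool" where
  "is_lean_kernel X Y D F G \<longleftrightarrow> G \<subseteq> F \<and> lean X Y D G \<and>
     (\<forall>H. H \<subseteq> F \<and> lean X Y D H \<longrightarrow> H \<subseteq> G)"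

definition aut_step :: "'v set \<Rightarrow> 'v set \<Rightarrow> ('v \<Rightarrow> 'v set) \<Rightarrow> 'v cnf \<Rightarrow> 'v cnf \<Rightarrow> bool" where
  "aut_step X Y D G G' \<longleftrightarrow> (\<exists>\<phi>. nontrivial_autarky X Y D G \<phi> \<and> G' = apply_aut \<phi> G)"

end

theory Submission
  imports Defs
begin

text \<open>Every reduction step removes at least one clause, so it terminates on a finite matrix.
  An autarky of G restricts to an autarky of any H \<subseteq> G; if H is lean this restriction
  touches no clause of H, so H survives the step. Hence every lean sub-DQCNF of F survives
  every run, and a lean final result contains all of them, i.e. it is the lean kernel.\<close>

lemma autarky_antimono:
  "autarky X Y D G \<phi> \<Longrightarrow> H \<subseteq> G \<Longrightarrow> autarky X Y D H \<phi>"
  unfolding autarky_def by (meson subsetD)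

lemma lean_subset_apply_aut:
  assumes "autarky X Y D G \<phi>" and "H \<subseteq> G" and "lean X Y D H"
  shows "H \<subseteq> apply_aut \<phi> G"
proof -
  have "autarky X Y D H \<phi>"
    using assms(1,2) by (rule autarky_antimono)
  with assms(3) have "apply_aut \<phi> H = H"
    unfolding lean_def nontrivial_autarky_def by metis
  with assms(2) show ?thesis
    unfolding apply_aut_def by blast
qed

lemma aut_step_psubset: "aut_step X Y D G G' \<Longrightarrow> G' \<subset> G"
  unfolding aut_step_def nontrivial_autarky_def apply_aut_def by blast

lemma aut_step_keeps_lean_subset:
  assumes "aut_step X Y D G G'" and "H \<subseteq> G" and "lean X Y D H"
  shows "H \<subseteq> G'"
proof -
  obtain \<phi> where "autarky X Y D G \<phi>" and "G' = apply_aut \<phi> G"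
    using assms(1) unfolding aut_step_def nontrivial_autarky_def by blast
  with assms(2,3) show ?thesis
    using lean_subset_apply_aut by blast
qed

lemma rtranclp_aut_step_subset: "(aut_step X Y D)\<^sup>*\<^sup>* F G \<Longrightarrow> G \<subseteq> F"
  by (induction rule: rtranclp_induct) (auto dest: aut_step_psubset)

lemma rtranclp_aut_step_keeps_lean_subset:
  "(aut_step X Y D)\<^sup>*\<^sup>* F G \<Longrightarrow> H \<subseteq> F \<Longrightarrow> lean X Y D H \<Longrightarrow> H \<subseteq> G"
  by (induction rule: rtranclp_induct) (use aut_step_keeps_lean_subset in blast)+

lemma no_infinite_psubset_chain:
  assumes "finite (A 0)"
  shows "\<not> (\<forall>n. A (Suc n) \<subset> A n)"
proof
  assume chain: "\<forall>n. A (Suc n) \<subset> A n"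
  have "finite (A n)" for n
  proof (induction n)
    case (Suc n)
    with chain show ?case by (meson finite_subset psubset_imp_subset)
  qed (rule assms)
  with chain have "\<forall>n. (A (Suc n), A n) \<in> finite_psubset"
    unfolding finite_psubset_def by blast
  then show False
    using wf_finite_psubset wf_iff_no_infinite_down_chain by blast
qed

lemma aut_step_terminates:
  assumes "finite F"
  shows "\<not> (\<exists>s. s 0 = F \<and> (\<forall>n. aut_step X Y D (s n) (s (Suc n))))"
proof
  assume "\<exists>s. s 0 = F \<and> (\<forall>n. aut_step X Y D (s n) (s (Suc n)))"
  then obtain s where "s 0 = F" and steps: "\<And>n. aut_step X Y D (s n) (s (Suc n))"
    by blast
  have "\<forall>n. s (Suc n) \<subset> s n"
    using aut_step_psubset[OF steps] by blast
  with \<open>s 0 = F\<close> assms no_infinite_psubset_chain show False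
    by metis
qed

theorem lemma3:
  fixes X Y :: "'v set" and D :: "'v \<Rightarrow> 'v set" and F :: "'v cnf"
  assumes "dqcnf X Y D F"
  shows "\<not> (\<exists>s. s 0 = F \<and> (\<forall>n. aut_step X Y D (s n) (s (Suc n)))) \<and>
         (\<forall>G. (aut_step X Y D)\<^sup>*\<^sup>* F G \<and> lean X Y D G \<longrightarrow> is_lean_kernel X Y D F G)"
proof
  have "finite F"
    using assms unfolding dqcnf_def by blast
  then show "\<not> (\<exists>s. s 0 = F \<and> (\<forall>n. aut_step X Y D (s n) (s (Suc n))))"
    by (rule aut_step_terminates)
  show "\<forall>G. (aut_step X Y D)\<^sup>*\<^sup>* F G \<and> lean X Y D G \<longrightarrow> is_lean_kernel X Y D F G"
    unfolding is_lean_kernel_def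
    using rtranclp_aut_step_subset rtranclp_aut_step_keeps_lean_subset by metis
qed

end
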